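(* Let $|\psi_{{\sf A}{\sf B}}\rangle\in\mathbb C^{d_{\sf A}}\otimes\mathbb C^{d_{\sf B}}$ be a unit vector and $\hat F_{\sf B}=\sum_i\alpha_i|\phi_i\rangle\langle\phi_i|^{\otimes2}$ with unit vectors $\phi_i\in\mathbb C^{d_{\sf B}}$ and $\alpha_i>0$ (acting on factors $2,4$). Define $\bar\omega_{{\sf A}|F_{\sf B}}=\mathrm{tr}_{\sf B}\big(S_{\sf A}\hat F_{\sf B}|\psi_{{\sf A}{\sf B}}\rangle\langle\psi_{{\sf A}{\sf B}}|^{\otimes2}\big)+\mathrm{tr}\big(|\psi_{{\sf A}{\sf B}}\rangle\langle\psi_{{\sf A}{\sf B}}|^{\otimes2}A_{\sf A}A_{\sf B}\big)\frac{\mathrm{tr}(\hat F_{\sf B})}{\mathrm{tr}(S_{\sf B})}\tilde S_{\sf A}$, and, when $\mathrm{tr}(\bar\omega_{{\sf A}|F_{\sf B}})>0$, the normalised conditional state $\tilde\omega_{{\sf A}|F_{\sf B}}=\bar\omega_{{\sf A}|F_{\sf B}}/\mathrm{tr}(\bar\omega_{{\sf A}|F_{\sf B}})$. Then $\tilde\omega_{{\sf A}|F_{\sf B}}$ belongs to the convex hull of $\{|\varphi\rangle\langle\varphi|^{\otimes2}:\varphi\in\mathbb C^{d_{\sf A}},\ \|\varphi\|=1\}$.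
   Context: $|\psi_{{\sf A}{\sf B}}\rangle^{\otimes2}$ is regarded as a vector in $\mathbb C^{d_{\sf A}}_1\otimes\mathbb C^{d_{\sf B}}_2\otimes\mathbb C^{d_{\sf A}}_3\otimes\mathbb C^{d_{\sf B}}_4$; $\mathrm{tr}_{\sf B}$ is the partial trace over factors $2,4$. $S_{\sf A}$, $A_{\sf A}$ are the projectors onto the symmetric and antisymmetric subspaces of $\mathbb C^{d_{\sf A}}_1\otimes\mathbb C^{d_{\sf A}}_3$; $S_{\sf B}$, $A_{\sf B}$ those of $\mathbb C^{d_{\sf B}}_2\otimes\mathbb C^{d_{\sf B}}_4$ (extended by identities where needed); $\tilde S_{\sf A}=S_{\sf A}/\mathrm{tr}S_{\sf A}$. *)

theory Defs
  imports "HOL-Analysis.Analysis"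
begin

text \<open>Finite-dimensional complex spaces are modelled as complex vectors indexed by
finite types: C^{d_A} = complex^'a, C^{d_B} = complex^'b.  The four-fold space
C^{d_A}_1 (x) C^{d_B}_2 (x) C^{d_A}_3 (x) C^{d_B}_4 is indexed by 'a * 'b * 'a * 'b.\<close>

type_synonym ('a, 'b) idx4 = "'a \<times> 'b \<times> 'a \<times> 'b"

definition msc :: "complex \<Rightarrow> complex^'n::finite^'m::finite \<Rightarrow> complex^'n^'m" where
  "msc c M = (\<chi> i j. c * M$i$j)"

definition proj :: "complex^'n::finite \<Rightarrow> complex^'n^'n" where
  "proj v = (\<chi> i j. v$i * cnj (v$j))"

definition vtensor :: "complex^'m::finite \<Rightarrow> complex^'n::finite \<Rightarrow> complex^('m \<times> 'n)" where
  "vtensor v w = vec_lambda (\<lambda>(i, j). v$i * w$j)"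

definition psi2 :: "complex^('a::finite \<times> 'b::finite) \<Rightarrow> complex^(('a, 'b) idx4)" where
  "psi2 \<psi> = vec_lambda (\<lambda>(a1, b2, a3, b4). \<psi>$(a1, b2) * \<psi>$(a3, b4))"

definition symP :: "complex^('c::finite \<times> 'c)^('c \<times> 'c)" where
  "symP = (vec_lambda (\<lambda>(i, j). vec_lambda (\<lambda>(i', j').
      ((if i = i' \<and> j = j' then 1 else 0) + (if i = j' \<and> j = i' then 1 else 0)) / 2)))"

definition asymP :: "complex^('c::finite \<times> 'c)^('c \<times> 'c)" where
  "asymP = (vec_lambda (\<lambda>(i, j). vec_lambda (\<lambda>(i', j').
      ((if i = i' \<and> j = j' then 1 else 0) - (if i = j' \<and> j = i' then 1 else 0)) / 2)))"

definition onA :: "complex^('a::finite \<times> 'a)^('a \<times> 'a) \<Rightarrow> complex^(('a, 'b::finite) idx4)^(('a, 'b) idx4)" where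
  "onA X = (vec_lambda (\<lambda>(a1, b2, a3, b4). vec_lambda (\<lambda>(a1', b2', a3', b4').
      X$(a1, a3)$(a1', a3') * (if b2 = b2' \<and> b4 = b4' then 1 else 0))))"

definition onB :: "complex^('b::finite \<times> 'b)^('b \<times> 'b) \<Rightarrow> complex^(('a::finite, 'b) idx4)^(('a, 'b) idx4)" where
  "onB Y = (vec_lambda (\<lambda>(a1, b2, a3, b4). vec_lambda (\<lambda>(a1', b2', a3', b4').
      Y$(b2, b4)$(b2', b4') * (if a1 = a1' \<and> a3 = a3' then 1 else 0))))"

definition trB :: "complex^(('a::finite, 'b::finite) idx4)^(('a, 'b) idx4) \<Rightarrow> complex^('a \<times> 'a)^('a \<times> 'a)" where
  "trB M = (vec_lambda (\<lambda>(a1, a3). vec_lambda (\<lambda>(a1', a3').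
      (\<Sum>b2\<in>UNIV. \<Sum>b4\<in>UNIV. M$(a1, b2, a3, b4)$(a1', b2, a3', b4)))))"

definition Fhat :: "'i set \<Rightarrow> ('i \<Rightarrow> real) \<Rightarrow> ('i \<Rightarrow> complex^'b::finite) \<Rightarrow> complex^('b \<times> 'b)^('b \<times> 'b)" where
  "Fhat I \<alpha> \<phi> = (\<Sum>i\<in>I. msc (complex_of_real (\<alpha> i)) (proj (vtensor (\<phi> i) (\<phi> i))))"

definition omega_bar :: "complex^('a::finite \<times> 'b::finite) \<Rightarrow> 'i set \<Rightarrow> ('i \<Rightarrow> real) \<Rightarrow> ('i \<Rightarrow> complex^'b)
    \<Rightarrow> complex^('a \<times> 'a)^('a \<times> 'a)" where
  "omega_bar \<psi> I \<alpha> \<phi> =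
     trB (onA symP ** onB (Fhat I \<alpha> \<phi>) ** proj (psi2 \<psi>))
     + msc (trace (proj (psi2 \<psi>) ** onA asymP ** onB asymP)
            * trace (Fhat I \<alpha> \<phi>) / trace (symP :: complex^('b \<times> 'b)^('b \<times> 'b)))
           (msc (1 / trace (symP :: complex^('a \<times> 'a)^('a \<times> 'a))) symP)"

definition omega_tilde :: "complex^('a::finite \<times> 'b::finite) \<Rightarrow> 'i set \<Rightarrow> ('i \<Rightarrow> real) \<Rightarrow> ('i \<Rightarrow> complex^'b)
    \<Rightarrow> complex^('a \<times> 'a)^('a \<times> 'a)" where
  "omega_tilde \<psi> I \<alpha> \<phi> = msc (1 / trace (omega_bar \<psi> I \<alpha> \<phi>)) (omega_bar \<psi> I \<alpha> \<phi>)"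

end

theory Submission
  imports Defs
begin

text \<open>Write \<open>\<chi>\<^sub>i = (1 \<otimes> \<langle>\<phi>\<^sub>i|) |\<psi>\<rangle>\<close>. Since \<open>\<chi>\<^sub>i \<otimes> \<chi>\<^sub>i\<close> is a symmetric tensor, the first term of
  \<open>\<omega>\<close>-bar equals \<open>\<Sum>\<^sub>i \<alpha>\<^sub>i |\<chi>\<^sub>i\<rangle>\<langle>\<chi>\<^sub>i|\<^sup>\<otimes>\<^sup>2\<close>, a nonnegative combination of twofold pure states. The weight
  of the normalised symmetric projector is nonnegative because \<open>A\<^sub>A A\<^sub>B\<close> is a real orthogonal projector, so
  \<open>tr(|\<Psi>\<rangle>\<langle>\<Psi>| A\<^sub>A A\<^sub>B) = \<parallel>A\<^sub>A A\<^sub>B \<Psi>\<parallel>\<^sup>2\<close>. The normalised symmetric projector is itself a mixture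
  of twofold pure states: averaging over vectors whose entries are fourth roots of unity reproduces its
  off-diagonal pattern, and the computational basis states correct the diagonal. So \<open>\<omega>\<close>-bar lies in the
  cone over the convex hull of the twofold pure states; as these all have trace 1, dividing by the trace
  lands in the hull.\<close>

lemma msc_of_real: "msc (complex_of_real r) M = r *\<^sub>R M"
  by (simp add: msc_def vec_eq_iff del: scaleR_conv_of_real) (simp add: scaleR_conv_of_real)

lemma sum_idx4:
  fixes f :: "('a::finite, 'b::finite) idx4 \<Rightarrow> 'c::comm_monoid_add"
  shows "(\<Sum>y\<in>UNIV. f y) = (\<Sum>x\<in>UNIV. \<Sum>z\<in>UNIV. f (fst x, fst z, snd x, snd z))"
proof -
  have "(\<Sum>x\<in>UNIV. \<Sum>z\<in>UNIV. f (fst x, fst z, snd x, snd z)) =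
        (\<Sum>xz\<in>UNIV \<times> UNIV. f (fst (fst xz), fst (snd xz), snd (fst xz), snd (snd xz)))"
    by (simp add: sum.cartesian_product case_prod_beta)
  also have "\<dots> = (\<Sum>y\<in>UNIV. f y)"
    by (rule sum.reindex_bij_witness[where i="\<lambda>(a1,b2,a3,b4). ((a1,a3),(b2,b4))"
          and j="\<lambda>xz. (fst (fst xz), fst (snd xz), snd (fst xz), snd (snd xz))"]) auto
  finally show ?thesis by simp
qed

lemma symP_entry:
  "(symP :: complex^('c::finite \<times> 'c)^('c \<times> 'c))$(a,b)$x =
     ((if x = (a,b) then 1 else 0) + (if x = (b,a) then 1 else 0)) / 2"
  by (cases x) (simp only: symP_def vec_lambda_beta prod.case prod.inject, smt (verit))

lemma asymP_entry:
  "(asymP :: complex^('c::finite \<times> 'c)^('c \<times> 'c))$(a,b)$x =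
     ((if x = (a,b) then 1 else 0) - (if x = (b,a) then 1 else 0)) / 2"
  by (cases x) (simp only: asymP_def vec_lambda_beta prod.case prod.inject, smt (verit))

lemma symP_row_sum:
  "(\<Sum>x\<in>UNIV. (symP :: complex^('c::finite \<times> 'c)^('c \<times> 'c))$(a,b)$x * g x) = (g (a,b) + g (b,a)) / 2"
  by (simp add: symP_entry add_divide_distrib distrib_right sum.distrib of_bool_def[symmetric]
      sum_divide_distrib[symmetric])

lemma asymP_row_sum:
  "(\<Sum>x\<in>UNIV. (asymP :: complex^('c::finite \<times> 'c)^('c \<times> 'c))$(a,b)$x * g x) = (g (a,b) - g (b,a)) / 2"
  by (simp add: asymP_entry diff_divide_distrib left_diff_distrib sum_subtractf of_bool_def[symmetric]
      sum_divide_distrib[symmetric])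

lemma onA_onB_entry:
  "(onA X ** onB Y) $ (a1,b2,a3,b4) $ (c1,e2,c3,e4) = X$(a1,a3)$(c1,c3) * Y$(b2,b4)$(e2,e4)"
proof -
  have "(onA X ** onB Y) $ (a1,b2,a3,b4) $ (c1,e2,c3,e4) =
     (\<Sum>x\<in>UNIV. \<Sum>z\<in>UNIV. (if x = (c1,c3) then X$(a1,a3)$x else 0) * (if z = (b2,b4) then Y$z$(e2,e4) else 0))"
    unfolding matrix_matrix_mult_def vec_lambda_beta sum_idx4
    by (intro sum.cong refl) (auto simp: onA_def onB_def)
  also have "\<dots> = X$(a1,a3)$(c1,c3) * Y$(b2,b4)$(e2,e4)"
    unfolding sum_product[symmetric] by simp
  finally show ?thesis .
qed

lemma matrix_mult_proj_entry: "(M ** proj v)$p$q = (\<Sum>y\<in>UNIV. M$p$y * v$y) * cnj (v$q)"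
  by (simp add: matrix_matrix_mult_def proj_def sum_distrib_right mult.assoc)

lemma psi2_entry: "psi2 \<psi> $ (a1,b2,a3,b4) = \<psi>$(a1,b2) * \<psi>$(a3,b4)"
  by (simp add: psi2_def)

lemma proj_vtensor_entry: "proj (vtensor u w) $ (i,j) $ z = u$i * w$j * cnj (u$(fst z) * w$(snd z))"
  by (cases z) (simp add: proj_def vtensor_def)

section \<open>The partial-trace term\<close>

definition partial_bra :: "complex^('a::finite \<times> 'b::finite) \<Rightarrow> complex^'b \<Rightarrow> complex^'a" where
  "partial_bra \<psi> \<phi> = (\<chi> a. \<Sum>b\<in>UNIV. \<psi>$(a,b) * cnj (\<phi>$b))"

lemma partial_bra_product:
  "(\<Sum>z\<in>UNIV. cnj (\<phi>$(fst z) * \<phi>$(snd z)) * (\<psi>$(a, fst z) * \<psi>$(a', snd z))) =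
     partial_bra \<psi> \<phi> $ a * partial_bra \<psi> \<phi> $ a'"
proof -
  have "partial_bra \<psi> \<phi> $ a * partial_bra \<psi> \<phi> $ a' =
      (\<Sum>z\<in>UNIV \<times> UNIV. (\<psi>$(a, fst z) * cnj (\<phi>$(fst z))) * (\<psi>$(a', snd z) * cnj (\<phi>$(snd z))))"
    by (simp add: partial_bra_def sum_product sum.cartesian_product case_prod_beta)
  then show ?thesis
    by (simp add: UNIV_Times_UNIV mult_ac)
qed

lemma trB_symP_entry:
  "trB (onA symP ** onB F ** proj (psi2 \<psi>)) $ (a1,a3) $ (a1',a3') =
   (\<Sum>b2\<in>UNIV. \<Sum>b4\<in>UNIV.
      (\<Sum>y\<in>UNIV. \<Sum>z\<in>UNIV. symP$(a1,a3)$y * F$(b2,b4)$z * (\<psi>$(fst y, fst z) * \<psi>$(snd y, snd z)))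
       * cnj (\<psi>$(a1',b2) * \<psi>$(a3',b4)))"
  unfolding trB_def vec_lambda_beta prod.case matrix_mult_proj_entry
  by (simp add: sum_idx4[where f="\<lambda>y. (onA symP ** onB F) $ (a1, _, a3, _) $ y * psi2 \<psi> $ y"]
      onA_onB_entry psi2_entry mult.assoc)

text \<open>The symmetric projector acts trivially because \<open>\<chi> \<otimes> \<chi>\<close> is a symmetric tensor.\<close>
lemma trB_symP_proj_vtensor:
  "trB (onA symP ** onB (proj (vtensor \<phi> \<phi>)) ** proj (psi2 \<psi>)) =
     proj (vtensor (partial_bra \<psi> \<phi>) (partial_bra \<psi> \<phi>))"
proof -
  let ?c = "partial_bra \<psi> \<phi>"
  have inner: "(\<Sum>y\<in>UNIV. \<Sum>z\<in>UNIV. symP$(a1,a3)$y * proj (vtensor \<phi> \<phi>)$(b2,b4)$z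
                  * (\<psi>$(fst y, fst z) * \<psi>$(snd y, snd z)))
       = \<phi>$b2 * \<phi>$b4 * (?c$a1 * ?c$a3)" for a1 a3 b2 b4
  proof -
    have "(\<Sum>y\<in>UNIV. \<Sum>z\<in>UNIV. symP$(a1,a3)$y * proj (vtensor \<phi> \<phi>)$(b2,b4)$z
              * (\<psi>$(fst y, fst z) * \<psi>$(snd y, snd z)))
       = (\<Sum>y\<in>UNIV. symP$(a1,a3)$y * (\<phi>$b2 * \<phi>$b4 * (?c$(fst y) * ?c$(snd y))))"
      by (simp add: proj_vtensor_entry partial_bra_product[symmetric] sum_distrib_left mult_ac)
    also have "\<dots> = \<phi>$b2 * \<phi>$b4 * (?c$a1 * ?c$a3)"
      by (subst symP_row_sum) (simp add: mult_ac)
    finally show ?thesis .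
  qed
  have cnj_c: "cnj (?c$x) = (\<Sum>b\<in>UNIV. \<phi>$b * cnj (\<psi>$(x,b)))" for x
    by (simp add: partial_bra_def mult.commute)
  have "trB (onA symP ** onB (proj (vtensor \<phi> \<phi>)) ** proj (psi2 \<psi>)) $ (a1,a3) $ (a1',a3') =
      proj (vtensor ?c ?c) $ (a1,a3) $ (a1',a3')" for a1 a3 a1' a3'
  proof -
    have "trB (onA symP ** onB (proj (vtensor \<phi> \<phi>)) ** proj (psi2 \<psi>)) $ (a1,a3) $ (a1',a3')
       = (\<Sum>b2\<in>UNIV. \<Sum>b4\<in>UNIV. (\<phi>$b2 * cnj (\<psi>$(a1',b2))) * (\<phi>$b4 * cnj (\<psi>$(a3',b4))))
           * (?c$a1 * ?c$a3)"
      unfolding trB_symP_entry inner by (simp add: sum_distrib_left sum_distrib_right mult_ac)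
    also have "\<dots> = (cnj (?c$a1') * cnj (?c$a3')) * (?c$a1 * ?c$a3)"
      unfolding cnj_c sum_product by simp
    also have "\<dots> = proj (vtensor ?c ?c) $ (a1,a3) $ (a1',a3')"
      by (simp add: proj_vtensor_entry mult_ac)
    finally show ?thesis .
  qed
  then show ?thesis
    by (simp add: vec_eq_iff)
qed

lemma linear_trB_symP: "linear (\<lambda>F. trB (onA symP ** onB F ** proj (psi2 \<psi>)))"
proof (rule linearI)
  show "trB (onA symP ** onB (F + G) ** proj (psi2 \<psi>)) =
      trB (onA symP ** onB F ** proj (psi2 \<psi>)) + trB (onA symP ** onB G ** proj (psi2 \<psi>))" for F G
    by (simp add: vec_eq_iff trB_symP_entry distrib_left distrib_right sum.distrib)
  show "trB (onA symP ** onB (r *\<^sub>R F) ** proj (psi2 \<psi>)) =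
      r *\<^sub>R trB (onA symP ** onB F ** proj (psi2 \<psi>))" for r F
    by (simp add: vec_eq_iff trB_symP_entry scaleR_conv_of_real[where 'a=complex] sum_distrib_left mult_ac
        del: scaleR_conv_of_real)
qed

lemma trB_symP_Fhat:
  assumes "finite I"
  shows "trB (onA symP ** onB (Fhat I \<alpha> \<phi>) ** proj (psi2 \<psi>)) =
     (\<Sum>i\<in>I. \<alpha> i *\<^sub>R proj (vtensor (partial_bra \<psi> (\<phi> i)) (partial_bra \<psi> (\<phi> i))))"
  unfolding Fhat_def msc_of_real
  using linear_sum[OF linear_trB_symP, of _ I \<psi>] linear_scale[OF linear_trB_symP, of _ _ \<psi>]
  by (simp add: trB_symP_proj_vtensor)

section \<open>The antisymmetric weight\<close>

lemma of_real_norm_power2_vec: "complex_of_real ((norm u)\<^sup>2) = (\<Sum>i\<in>UNIV. u$i * cnj (u$i))"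
proof -
  have "(norm u)\<^sup>2 = (\<Sum>i\<in>UNIV. (norm (u$i))\<^sup>2)"
    unfolding norm_vec_def L2_set_def by (simp add: sum_nonneg)
  then show ?thesis
    by (simp only: of_real_sum complex_norm_square)
qed

lemma norm_eq_1_of_sum_cnj: "(\<Sum>i\<in>UNIV. u$i * cnj (u$i)) = 1 \<Longrightarrow> norm (u :: complex^'n::finite) = 1"
proof -
  assume "(\<Sum>i\<in>UNIV. u$i * cnj (u$i)) = 1"
  then have "(norm u)\<^sup>2 = 1"
    by (metis of_real_norm_power2_vec of_real_eq_1_iff)
  then show ?thesis
    using norm_ge_zero[of u] by (auto simp: power2_eq_1_iff)
qed

lemma trace_proj_mult_real_projector:
  fixes X :: "complex^'n::finite^'n"
  assumes idem: "X ** X = X" and sym: "\<And>p q. X$p$q = X$q$p" and real: "\<And>p q. cnj (X$p$q) = X$p$q"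
  shows "trace (proj v ** X) = of_real ((norm (X *v v))\<^sup>2)"
proof -
  have XX: "X$q$p = (\<Sum>z\<in>UNIV. X$q$z * X$z$p)" for p q
    using arg_cong[OF idem, of "\<lambda>M. M$q$p"] by (simp add: matrix_matrix_mult_def)
  have "trace (proj v ** X) = (\<Sum>p\<in>UNIV. \<Sum>q\<in>UNIV. (v$p * cnj (v$q)) * X$q$p)"
    by (simp add: trace_def matrix_matrix_mult_def proj_def)
  also have "\<dots> = (\<Sum>p\<in>UNIV. \<Sum>q\<in>UNIV. \<Sum>z\<in>UNIV. (v$p * cnj (v$q)) * (X$q$z * X$z$p))"
    by (subst XX) (simp add: sum_distrib_left)
  also have "\<dots> = (\<Sum>z\<in>UNIV. \<Sum>p\<in>UNIV. \<Sum>q\<in>UNIV. (X$z$p * v$p) * (X$q$z * cnj (v$q)))"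
    by (subst sum.swap, subst (2) sum.swap) (simp add: mult_ac)
  also have "\<dots> = (\<Sum>z\<in>UNIV. (X *v v)$z * cnj ((X *v v)$z))"
  proof (rule sum.cong[OF refl])
    fix z
    have "cnj ((X *v v)$z) = (\<Sum>q\<in>UNIV. X$q$z * cnj (v$q))"
      by (simp add: matrix_vector_mult_def real sym)
    then show "(\<Sum>p\<in>UNIV. \<Sum>q\<in>UNIV. (X$z$p * v$p) * (X$q$z * cnj (v$q))) = (X *v v)$z * cnj ((X *v v)$z)"
      by (simp add: matrix_vector_mult_def sum_product)
  qed
  finally show ?thesis
    by (simp only: of_real_norm_power2_vec)
qed

lemma asymP_symmetric: "(asymP :: complex^('c::finite \<times> 'c)^('c \<times> 'c))$x$y = asymP$y$x"
  by (cases x; cases y) (simp only: asymP_entry prod.inject, smt (verit))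

lemma asymP_real: "cnj ((asymP :: complex^('c::finite \<times> 'c)^('c \<times> 'c))$x$y) = asymP$x$y"
  by (cases x) (simp only: asymP_entry complex_cnj_diff complex_cnj_divide complex_cnj_one complex_cnj_zero
      complex_cnj_numeral if_distrib[of cnj])

lemma asymP_idempotent_entry:
  "(\<Sum>x\<in>UNIV. (asymP :: complex^('c::finite \<times> 'c)^('c \<times> 'c))$(a,b)$x * asymP$x$c) = asymP$(a,b)$c"
proof -
  have "asymP$(b,a)$c = - (asymP :: complex^('c \<times> 'c)^('c \<times> 'c))$(a,b)$c"
    by (simp only: asymP_entry minus_divide_left minus_diff_eq)
  then show ?thesis
    by (simp add: asymP_row_sum)
qed

lemma onA_onB_asymP_idempotent:
  "(onA asymP ** onB asymP :: complex^(('a::finite,'b::finite) idx4)^(('a,'b) idx4)) ** (onA asymP ** onB asymP)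
     = onA asymP ** onB asymP"
proof -
  let ?A = "asymP :: complex^('a \<times> 'a)^('a \<times> 'a)"
  let ?B = "asymP :: complex^('b \<times> 'b)^('b \<times> 'b)"
  have "((onA ?A ** onB ?B) ** (onA ?A ** onB ?B)) $ (a1,b2,a3,b4) $ (c1,e2,c3,e4)
     = (\<Sum>x\<in>UNIV. \<Sum>z\<in>UNIV. (?A$(a1,a3)$x * ?A$x$(c1,c3)) * (?B$(b2,b4)$z * ?B$z$(e2,e4)))"
    for a1 b2 a3 b4 c1 e2 c3 e4
    unfolding matrix_matrix_mult_def[of "onA ?A ** onB ?B"] vec_lambda_beta sum_idx4
    by (simp only: onA_onB_entry prod.collapse mult_ac)
  then show ?thesis
    by (simp add: vec_eq_iff sum_product[symmetric] asymP_idempotent_entry onA_onB_entry)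
qed

lemma trace_psi2_antisymmetric:
  "trace (proj (psi2 \<psi>) ** onA asymP ** onB asymP :: complex^(('a::finite,'b::finite) idx4)^(('a,'b) idx4)) =
     of_real ((norm ((onA asymP ** onB asymP :: complex^(('a,'b) idx4)^(('a,'b) idx4)) *v psi2 \<psi>))\<^sup>2)"
proof -
  let ?X = "onA asymP ** onB asymP :: complex^(('a,'b) idx4)^(('a,'b) idx4)"
  have sym: "?X$p$q = ?X$q$p" for p q
    by (cases p rule: prod_cases4; cases q rule: prod_cases4)
       (simp only: onA_onB_entry, metis asymP_symmetric)
  have real: "cnj (?X$p$q) = ?X$p$q" for p q
    by (cases p rule: prod_cases4; cases q rule: prod_cases4) (simp add: onA_onB_entry asymP_real)
  show ?thesis
    using trace_proj_mult_real_projector[OF onA_onB_asymP_idempotent sym real, of "psi2 \<psi>"]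
    by (simp only: matrix_mul_assoc)
qed

section \<open>The normalised symmetric projector\<close>

definition twofold_pure_states :: "(complex^('a::finite \<times> 'a)^('a \<times> 'a)) set" where
  "twofold_pure_states = {proj (vtensor \<phi> \<phi>) | \<phi> :: complex^'a. norm \<phi> = 1}"

definition quarter_phases :: "complex set" where
  "quarter_phases = {1, \<i>, -1, -\<i>}"

definition phase_vectors :: "('a \<Rightarrow> complex) set" where
  "phase_vectors = {z. \<forall>a. z a \<in> quarter_phases}"

lemma finite_phase_vectors: "finite (phase_vectors :: ('a::finite \<Rightarrow> complex) set)"
proof -
  have "phase_vectors = Pi\<^sub>E (UNIV::'a set) (\<lambda>_. quarter_phases)"
    by (auto simp: phase_vectors_def PiE_UNIV_domain)
  moreover have "finite (Pi\<^sub>E (UNIV::'a set) (\<lambda>_. quarter_phases))"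
    by (rule finite_PiE) (simp_all add: quarter_phases_def)
  ultimately show ?thesis
    by simp
qed

lemma card_phase_vectors_pos: "card (phase_vectors :: ('a::finite \<Rightarrow> complex) set) > 0"
proof -
  have "(\<lambda>_. 1) \<in> (phase_vectors :: ('a \<Rightarrow> complex) set)"
    by (simp add: phase_vectors_def quarter_phases_def)
  then show ?thesis
    using finite_phase_vectors card_gt_0_iff by blast
qed

lemma phase_vectors_unit:
  assumes "z \<in> phase_vectors"
  shows "z a * cnj (z a) = 1"
proof -
  have "z a \<in> quarter_phases"
    using assms by (simp add: phase_vectors_def)
  then show ?thesis
    by (auto simp: quarter_phases_def)
qed

lemma sum_phase_vectors_rotate:
  "(\<Sum>z\<in>phase_vectors. f z) = (\<Sum>z\<in>phase_vectors. f (z(m := \<i> * z m)))"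
  by (rule sum.reindex_bij_witness[where j="\<lambda>z. z(m := -\<i> * z m)" and i="\<lambda>z. z(m := \<i> * z m)"])
     (auto simp: phase_vectors_def quarter_phases_def fun_eq_iff)

text \<open>Rotating the coordinate \<open>m\<close> by \<open>\<i>\<close> permutes the phase vectors and multiplies the summand by
  a fourth root of unity, which differs from \<open>1\<close> for \<open>m = i\<close> or \<open>m = j\<close> unless \<open>{i, j} = {k, l}\<close>.\<close>
lemma phase_vectors_moment:
  "(\<Sum>z\<in>(phase_vectors::('a::finite \<Rightarrow> complex) set). z i * z j * cnj (z k * z l)) =
     (if (i = k \<and> j = l) \<or> (i = l \<and> j = k) then of_nat (card (phase_vectors::('a \<Rightarrow> complex) set)) else 0)"
proof (cases "(i = k \<and> j = l) \<or> (i = l \<and> j = k)")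
  case True
  have "z i * z j * cnj (z k * z l) = 1" if "z \<in> phase_vectors" for z :: "'a \<Rightarrow> complex"
  proof -
    note unit = phase_vectors_unit[OF that]
    have "z i * z j * cnj (z k * z l) = (z i * cnj (z i)) * (z j * cnj (z j))"
      using True by (auto simp: mult_ac)
    then show ?thesis
      by (simp add: unit)
  qed
  then show ?thesis
    using True by simp
next
  case False
  define S where "S = (\<Sum>z\<in>(phase_vectors::('a \<Rightarrow> complex) set). z i * z j * cnj (z k * z l))"
  define w :: "'a \<Rightarrow> 'a \<Rightarrow> complex" where "w m x = (if x = m then \<i> else 1)" for m x
  have rotate: "S = (w m i * w m j * cnj (w m k * w m l)) * S" for m
  proof -
    have "(z(m := \<i> * z m)) x = w m x * z x" for z :: "'a \<Rightarrow> complex" and x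
      by (simp add: w_def)
    then show ?thesis
      unfolding S_def by (subst sum_phase_vectors_rotate[where m=m]) (simp add: sum_distrib_left mult_ac)
  qed
  have "w i i * w i j * cnj (w i k * w i l) \<noteq> 1 \<or> w j i * w j j * cnj (w j k * w j l) \<noteq> 1"
    using False by (auto simp: w_def split: if_splits)
  then have "S = 0"
    using rotate[of i] rotate[of j] by (metis mult_cancel_right2)
  then show ?thesis
    unfolding S_def if_not_P[OF False] .
qed

definition phase_state :: "('a::finite \<Rightarrow> complex) \<Rightarrow> complex^'a" where
  "phase_state z = (\<chi> a. z a / of_real (sqrt (real CARD('a))))"

lemma of_real_sqrt_card_square:
  "of_real (sqrt (real CARD('a::finite))) * of_real (sqrt (real CARD('a))) = (of_nat CARD('a) :: complex)"
proof -
  have "sqrt (real CARD('a)) * sqrt (real CARD('a)) = real CARD('a)"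
    by simp
  then show ?thesis
    by (simp only: of_real_mult[symmetric] of_real_of_nat_eq)
qed

lemma norm_phase_state:
  assumes "z \<in> phase_vectors"
  shows "norm (phase_state z :: complex^'a::finite) = 1"
proof (rule norm_eq_1_of_sum_cnj)
  have "phase_state z $ a * cnj (phase_state z $ a) = 1 / of_nat CARD('a)" for a
  proof -
    show ?thesis
      using phase_vectors_unit[OF assms, of a]
      by (simp add: phase_state_def of_real_sqrt_card_square[symmetric])
  qed
  then show "(\<Sum>a\<in>UNIV. phase_state z $ a * cnj (phase_state z $ a)) = 1"
    by simp
qed

lemma proj_vtensor_phase_state_entry:
  "proj (vtensor (phase_state z :: complex^'a::finite) (phase_state z)) $ (i,j) $ (k,l) =
     z i * z j * cnj (z k * z l) / of_nat (CARD('a) * CARD('a))"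
  by (simp add: proj_vtensor_entry phase_state_def of_real_sqrt_card_square[symmetric] mult_ac)

lemma norm_axis_complex: "norm (axis a (1::complex) :: complex^'n::finite) = 1"
  by (rule norm_eq_1_of_sum_cnj) (simp add: axis_def if_distrib sum.delta cong: if_cong)

lemma proj_vtensor_axis_entry:
  "proj (vtensor (axis a 1) (axis a 1)) $ (i,j) $ (k,l) = (if i = a \<and> j = a \<and> k = a \<and> l = a then 1 else (0::complex))"
  by (simp add: proj_vtensor_entry axis_def)

definition phase_average :: "complex^('a::finite \<times> 'a)^('a \<times> 'a)" where
  "phase_average = (\<Sum>z\<in>phase_vectors. (1 / real (card (phase_vectors::('a \<Rightarrow> complex) set))) *\<^sub>R
      proj (vtensor (phase_state z :: complex^'a) (phase_state z)))"

definition basis_average :: "complex^('a::finite \<times> 'a)^('a \<times> 'a)" where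
  "basis_average = (\<Sum>a\<in>UNIV. (1 / real CARD('a)) *\<^sub>R proj (vtensor (axis a 1 :: complex^'a) (axis a 1)))"

lemma phase_average_in_convex_hull: "phase_average \<in> convex hull twofold_pure_states"
  unfolding phase_average_def
proof (rule convex_sum[OF finite_phase_vectors convex_convex_hull])
  show "(\<Sum>z\<in>(phase_vectors::('a \<Rightarrow> complex) set). 1 / real (card (phase_vectors::('a \<Rightarrow> complex) set))) = 1"
    using card_phase_vectors_pos[where 'a='a] by simp
  show "proj (vtensor (phase_state z :: complex^'a) (phase_state z)) \<in> convex hull twofold_pure_states"
    if "z \<in> phase_vectors" for z
    using that norm_phase_state by (auto simp: twofold_pure_states_def intro: hull_inc)
qed simp

lemma basis_average_in_convex_hull: "basis_average \<in> convex hull twofold_pure_states"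
  unfolding basis_average_def
proof (rule convex_sum[OF finite convex_convex_hull])
  show "proj (vtensor (axis a 1 :: complex^'a) (axis a 1)) \<in> convex hull twofold_pure_states" for a
    unfolding twofold_pure_states_def by (rule hull_inc) (use norm_axis_complex in blast)
qed simp_all

lemma phase_average_entry:
  "(phase_average :: complex^('a::finite \<times> 'a)^('a \<times> 'a)) $ (i,j) $ (k,l) =
     (if (i = k \<and> j = l) \<or> (i = l \<and> j = k) then 1 else 0) / of_nat (CARD('a) * CARD('a))"
proof -
  have "(phase_average :: complex^('a \<times> 'a)^('a \<times> 'a)) $ (i,j) $ (k,l) =
     (\<Sum>z\<in>(phase_vectors::('a \<Rightarrow> complex) set). z i * z j * cnj (z k * z l))
       / of_nat (card (phase_vectors::('a \<Rightarrow> complex) set)) / of_nat (CARD('a) * CARD('a))"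
    unfolding phase_average_def sum_component vector_scaleR_component proj_vtensor_phase_state_entry
    by (simp add: scaleR_conv_of_real sum_divide_distrib)
  then show ?thesis
    using card_phase_vectors_pos[where 'a='a] by (simp only: phase_vectors_moment) simp
qed

lemma basis_average_entry:
  "(basis_average :: complex^('a::finite \<times> 'a)^('a \<times> 'a)) $ (i,j) $ (k,l) =
     (if i = j \<and> j = k \<and> k = l then 1 else 0) / of_nat CARD('a)"
proof -
  have "(basis_average :: complex^('a \<times> 'a)^('a \<times> 'a)) $ (i,j) $ (k,l) =
     (\<Sum>a\<in>UNIV. if a = i then (if i = j \<and> j = k \<and> k = l then 1 else 0) / of_nat CARD('a) else 0)"
    unfolding basis_average_def sum_component vector_scaleR_component proj_vtensor_axis_entry
    by (rule sum.cong) (auto simp: scaleR_conv_of_real)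
  then show ?thesis
    by (simp only: sum.delta finite UNIV_I if_True)
qed

lemma trace_symP: "trace (symP :: complex^('c::finite \<times> 'c)^('c \<times> 'c)) = of_nat (CARD('c) * CARD('c) + CARD('c)) / 2"
proof -
  have "trace (symP :: complex^('c \<times> 'c)^('c \<times> 'c)) =
      (\<Sum>a\<in>(UNIV::'c set). \<Sum>b\<in>UNIV. (1 + (if a = b then 1 else 0)) / 2)"
    unfolding trace_def UNIV_Times_UNIV[symmetric] sum.cartesian_product
    by (intro sum.cong refl) (clarsimp simp: symP_entry)
  also have "\<dots> = of_nat (CARD('c) * CARD('c) + CARD('c)) / 2"
    by (simp add: add_divide_distrib sum.distrib sum_divide_distrib[symmetric] sum.delta)
       (simp add: distrib_left times_divide_eq_right)
  finally show ?thesis .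
qed

text \<open>With \<open>n = d\<^sub>A\<close>: \<open>S/tr S = n/(n+1) \<cdot> phase_average + 1/(n+1) \<cdot> basis_average\<close>; the phase average has the
  entries of \<open>2S/n\<^sup>2\<close> except on the diagonal \<open>i = j = k = l\<close>, where the basis average compensates.\<close>
lemma normalized_symP_decomposition:
  "msc (1 / trace (symP :: complex^('a::finite \<times> 'a)^('a \<times> 'a))) (symP :: complex^('a \<times> 'a)^('a \<times> 'a)) =
     (real CARD('a) / (real CARD('a) + 1)) *\<^sub>R phase_average + (1 / (real CARD('a) + 1)) *\<^sub>R basis_average"
proof -
  define n :: complex where "n = of_nat CARD('a)"
  have n: "n \<noteq> 0" "n + 1 \<noteq> 0"
    unfolding n_def by (simp, metis of_nat_Suc of_nat_eq_0_iff add.commute nat.distinct(1))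
  have coefficients: "(1 / ((n * n + n) / 2)) * (((if P1 then 1 else 0) + (if P2 then 1 else 0)) / 2)
      = (n / (n + 1)) * ((if C then 1 else 0) / (n * n)) + (1 / (n + 1)) * ((if A then 1 else 0) / n)"
    if "C = (P1 \<or> P2)" "A = (P1 \<and> P2)" for P1 P2 C A
    using n that by (cases P1; cases P2) (simp_all add: field_simps)
  have "msc (1 / trace (symP :: complex^('a \<times> 'a)^('a \<times> 'a))) (symP :: complex^('a \<times> 'a)^('a \<times> 'a))
       $ (i,j) $ (k,l) =
     ((real CARD('a) / (real CARD('a) + 1)) *\<^sub>R phase_average
       + (1 / (real CARD('a) + 1)) *\<^sub>R basis_average) $ (i,j) $ (k,l)" for i j k l
    unfolding msc_def vec_lambda_beta vector_add_component vector_scaleR_component phase_average_entry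
      basis_average_entry symP_entry trace_symP
    by (simp only: scaleR_conv_of_real of_nat_mult of_nat_add of_real_divide of_real_of_nat_eq of_real_add
        of_real_1 n_def[symmetric], rule coefficients) auto
  then show ?thesis
    unfolding vec_eq_iff split_paired_All by blast
qed

lemma normalized_symP_in_convex_hull:
  "msc (1 / trace (symP :: complex^('a::finite \<times> 'a)^('a \<times> 'a))) (symP :: complex^('a \<times> 'a)^('a \<times> 'a))
     \<in> convex hull twofold_pure_states"
  unfolding normalized_symP_decomposition
  by (rule convexD[OF convex_convex_hull phase_average_in_convex_hull basis_average_in_convex_hull])
     (auto simp: divide_simps)

section \<open>Traces and the cone over the twofold pure states\<close>

lemma trace_scaleR: "trace (r *\<^sub>R M) = of_real r * trace (M :: complex^'n::finite^'n)"
  by (simp add: trace_def sum_distrib_left scaleR_conv_of_real[where 'a=complex] del: scaleR_conv_of_real)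

lemma trace_sum: "finite I \<Longrightarrow> trace (\<Sum>i\<in>I. f i) = (\<Sum>i\<in>I. trace (f i :: 'a::comm_semiring_1^'n::finite^'n))"
  by (induction I rule: finite_induct) (simp_all add: trace_add trace_def[of 0])

lemma trace_proj_vtensor: "trace (proj (vtensor u u)) = (\<Sum>i\<in>UNIV. u$i * cnj (u$i))\<^sup>2"
proof -
  have "trace (proj (vtensor u u)) = (\<Sum>x\<in>UNIV \<times> UNIV. proj (vtensor u u) $ x $ x)"
    by (simp add: trace_def UNIV_Times_UNIV)
  also have "\<dots> = (\<Sum>i\<in>UNIV. \<Sum>j\<in>UNIV. (u$i * cnj (u$i)) * (u$j * cnj (u$j)))"
    by (simp add: sum.cartesian_product proj_def vtensor_def case_prod_beta mult_ac)
  also have "\<dots> = (\<Sum>i\<in>UNIV. u$i * cnj (u$i))\<^sup>2"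
    by (simp add: power2_eq_square sum_product)
  finally show ?thesis .
qed

lemma trace_proj_vtensor_unit: "norm u = 1 \<Longrightarrow> trace (proj (vtensor u u)) = 1"
  by (simp add: trace_proj_vtensor of_real_norm_power2_vec[symmetric])

lemma trace_Fhat:
  assumes "finite I" and "\<forall>i\<in>I. norm (\<phi> i) = 1"
  shows "trace (Fhat I \<alpha> \<phi>) = of_real (\<Sum>i\<in>I. \<alpha> i)"
  using assms by (simp add: Fhat_def msc_of_real trace_sum trace_scaleR trace_proj_vtensor_unit)

lemma trace_convex_hull:
  fixes K :: "(complex^'n::finite^'n) set"
  assumes "\<forall>k\<in>K. trace k = 1" and "x \<in> convex hull K"
  shows "trace x = 1"
proof -
  have "convex {y :: complex^'n^'n. trace y = 1}"
    unfolding convex_def by (auto simp: trace_add trace_scaleR simp flip: of_real_add)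
  then have "convex hull K \<subseteq> {y. trace y = 1}"
    using assms(1) by (intro hull_minimal) auto
  then show ?thesis
    using assms(2) by auto
qed

lemma normalized_in_convex_hull:
  fixes K :: "(complex^'n::finite^'n) set"
  assumes K: "\<forall>k\<in>K. trace k = 1" and x: "x \<in> convex_cone hull K" and nonzero: "trace x \<noteq> 0"
  shows "msc (1 / trace x) x \<in> convex hull K"
proof -
  have "K \<noteq> {}"
    using x nonzero by (auto simp: trace_def)
  then obtain c y where y: "y \<in> convex hull K" and xy: "x = c *\<^sub>R y"
    using x by (auto simp: convex_cone_hull_convex_hull_nonempty)
  have trace_x: "trace x = of_real c"
    using trace_convex_hull[OF K y] by (simp add: xy trace_scaleR)
  with nonzero have "c \<noteq> 0"
    by auto
  then have "msc (1 / trace x) x = y"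
    unfolding trace_x by (simp add: xy vec_eq_iff msc_def scaleR_conv_of_real[where 'a=complex] del: scaleR_conv_of_real)
  with y show ?thesis
    by simp
qed

lemma convex_cone_hull_sum:
  assumes "finite I" and "\<And>i. i \<in> I \<Longrightarrow> f i \<in> convex_cone hull S"
  shows "(\<Sum>i\<in>I. f i) \<in> convex_cone hull S"
  using assms by (induction I rule: finite_induct) (simp_all add: convex_cone_hull_contains_0 convex_cone_hull_add)

lemma proj_vtensor_scaleR:
  "proj (vtensor (s *\<^sub>R u) (s *\<^sub>R u)) = (s^4) *\<^sub>R proj (vtensor u (u :: complex^'n::finite))"
  by (simp add: vec_eq_iff proj_def vtensor_def split_beta scaleR_conv_of_real[where 'a=complex]
      power4_eq_xxxx mult_ac del: scaleR_conv_of_real)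

lemma proj_vtensor_in_convex_cone_hull: "proj (vtensor c c) \<in> convex_cone hull twofold_pure_states"
proof (cases "c = 0")
  case True
  then have "proj (vtensor c c) = 0"
    by (simp add: vec_eq_iff proj_def vtensor_def split_beta)
  then show ?thesis
    by (simp add: convex_cone_hull_contains_0)
next
  case False
  define u where "u = (1 / norm c) *\<^sub>R c"
  have "norm u = 1" and c: "c = norm c *\<^sub>R u"
    using False by (simp_all add: u_def)
  then have "proj (vtensor u u) \<in> convex_cone hull twofold_pure_states"
    by (auto simp: twofold_pure_states_def intro: hull_inc)
  moreover have "proj (vtensor c c) = (norm c ^ 4) *\<^sub>R proj (vtensor u u)"
    by (subst c, subst c) (rule proj_vtensor_scaleR)
  ultimately show ?thesis
    by (simp add: convex_cone_hull_mul)
qed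

lemma omega_bar_in_convex_cone_hull:
  fixes \<psi> :: "complex^('a::finite \<times> 'b::finite)" and \<phi> :: "'i \<Rightarrow> complex^'b"
  assumes I: "finite I" and \<alpha>: "\<forall>i\<in>I. \<alpha> i \<ge> 0" and \<phi>: "\<forall>i\<in>I. norm (\<phi> i) = 1"
  shows "omega_bar \<psi> I \<alpha> \<phi> \<in> convex_cone hull twofold_pure_states"
proof -
  define w where "w = (norm ((onA asymP ** onB asymP :: complex^(('a,'b) idx4)^(('a,'b) idx4)) *v psi2 \<psi>))\<^sup>2
    * (\<Sum>i\<in>I. \<alpha> i) / (real (CARD('b) * CARD('b) + CARD('b)) / 2)"
  have "w \<ge> 0"
    using \<alpha> by (simp add: w_def sum_nonneg)
  have weight: "trace (proj (psi2 \<psi>) ** onA asymP ** onB asymP :: complex^(('a,'b) idx4)^(('a,'b) idx4))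
      * trace (Fhat I \<alpha> \<phi>) / trace (symP :: complex^('b \<times> 'b)^('b \<times> 'b)) = of_real w"
    by (simp add: w_def trace_psi2_antisymmetric trace_Fhat[OF I \<phi>] trace_symP)
  have "trB (onA symP ** onB (Fhat I \<alpha> \<phi>) ** proj (psi2 \<psi>)) \<in> convex_cone hull twofold_pure_states"
    unfolding trB_symP_Fhat[OF I]
    using \<alpha> by (intro convex_cone_hull_sum[OF I] convex_cone_hull_mul proj_vtensor_in_convex_cone_hull) auto
  moreover have "w *\<^sub>R msc (1 / trace (symP :: complex^('a \<times> 'a)^('a \<times> 'a))) (symP :: complex^('a \<times> 'a)^('a \<times> 'a))
      \<in> convex_cone hull twofold_pure_states"
    using convex_cone_hull_mul[OF subsetD[OF convex_hull_subset_convex_cone_hull normalized_symP_in_convex_hull]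
        \<open>w \<ge> 0\<close>] .
  ultimately show ?thesis
    unfolding omega_bar_def weight msc_of_real by (rule convex_cone_hull_add)
qed

theorem mainTheorem13:
  fixes \<psi> :: "complex^('a::finite \<times> 'b::finite)"
    and I :: "'i set" and \<alpha> :: "'i \<Rightarrow> real" and \<phi> :: "'i \<Rightarrow> complex^'b"
  assumes "norm \<psi> = 1"
    and "finite I"
    and "\<forall>i\<in>I. \<alpha> i > 0"
    and "\<forall>i\<in>I. norm (\<phi> i) = 1"
    and "Re (trace (omega_bar \<psi> I \<alpha> \<phi>)) > 0"
  shows "omega_tilde \<psi> I \<alpha> \<phi> \<in>
           convex hull {proj (vtensor \<phi>' \<phi>') | \<phi>' :: complex^'a. norm \<phi>' = 1}"
proof -
  have "\<forall>k\<in>(twofold_pure_states :: (complex^('a \<times> 'a)^('a \<times> 'a)) set). trace k = 1"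
    by (auto simp: twofold_pure_states_def trace_proj_vtensor_unit)
  moreover have "omega_bar \<psi> I \<alpha> \<phi> \<in> convex_cone hull twofold_pure_states"
    using assms(2-4) by (intro omega_bar_in_convex_cone_hull) (auto simp: less_imp_le)
  moreover have "trace (omega_bar \<psi> I \<alpha> \<phi>) \<noteq> 0"
    using assms(5) by auto
  ultimately show ?thesis
    unfolding omega_tilde_def twofold_pure_states_def[symmetric] by (rule normalized_in_convex_hull)
qed

end
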